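(* Consider the RCP model without queue feedback with parameters $C,a,\tau_1,\tau_2>0$, $\gamma\in(0,1]$, and bifurcation parameter $\kappa>0$, and let $\kappa_c=\dfrac{\pi}{2a\cos\!\left(\frac{\pi(\tau_1-\tau_2)}{2(\tau_1+\tau_2)}\right)}$ be the value at which its equilibrium $R^*=\gamma C/2$ loses local stability through a Hopf bifurcation. Let $c_1(0)$ denote the first Lyapunov coefficient of the Hopf normal form at $\kappa=\kappa_c$ (Hassard–Kazarinoff–Wan normalization, $\dot z=i\omega_0 z+c_1(0)z|z|^2+\cdots$ on the center manifold), and $\vartheta=\pi\tau_1/(\tau_1+\tau_2)\in(0,\pi)$. Then $$\operatorname{sign}\big(\operatorname{Re}c_1(0)\big)=\operatorname{sign}\!\left(\frac{2\pi\,\tilde f(\vartheta)}{(\gamma C)^2(\tau_1+\tau_2)}\right)=\operatorname{sign}\tilde f(\vartheta)<0,$$ with $\tilde f$ as in the context. Consequently $\mu_2=-\operatorname{Re}c_1(0)/\alpha'(0)>0$ and $\beta_2=2\operatorname{Re}c_1(0)<0$, where $\alpha'(0)=\operatorname{Re}(d\lambda/d\kappa)|_{\kappa=\kappa_c}>0$: for all parameter values, the Hopf bifurcation is super-critical and the bifurcating periodic solutions are asymptotically orbitally stable.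
   Context: RCP model without queue feedback: $$\frac{d}{dt}R(t)=\kappa\,\frac{2aR(t)}{\gamma C(\tau_1+\tau_2)}\big(\gamma C-y(t)\big),\quad y(t)=R(t-\tau_1)+R(t-\tau_2).$$ $\omega_0=\pi/(\tau_1+\tau_2)$ is the crossing frequency, and $\lambda(\kappa)$ is the root of the characteristic equation $\lambda+\kappa\frac{a}{\tau_1+\tau_2}(e^{-\lambda\tau_1}+e^{-\lambda\tau_2})=0$ with $\lambda(\kappa_c)=i\omega_0$. $$\tilde f(\vartheta)=-2\pi\sin^4\vartheta-\pi\sin^2\vartheta\cos^2(2\vartheta)-2\cos(2\vartheta)\sin^3\vartheta-\cos(2\vartheta)\sin^2\vartheta\cos\vartheta\,(\pi-2\vartheta).$$ Super-critical means $\mu_2>0$ (periodic orbits exist for $\kappa>\kappa_c$); asymptotic orbital stability of the orbits corresponds to Floquet exponent $\beta_2<0$. *)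

theory Defs
  imports "HOL-Analysis.Analysis"
begin

text \<open>A scalar delay differential equation with finitely many discrete delays
  d 0, ..., d (n-1) (all non-negative), written in perturbation form around an equilibrium,
    u'(t) = (SUM j<n. b j * u(t - d j)) + F(u_t),
    F(phi) = (SUM i<n. SUM j<n. Q i j * phi(- d i) * phi(- d j))   (quadratic nonlinearity).  At a Hopf point with
  Delta(i w) = 0 the first Lyapunov coefficient c1(0) of the normal form
  z' = i w z + c1(0) z |z|^2 + ... on the centre manifold is given by the HKW recipe:
  q(theta) = exp(i w theta), adjoint normalised so that the multiplier conj(q*(0)) equals
  1 / Delta'(i w), g = conj(q*(0)) F(z q + conj z conj q + W), with
  g = g20 z^2/2 + g11 z conj z + g02 conj z^2/2 + g21 z^2 conj z / 2 + ...,
  W20, W11 the centre-manifold coefficients, and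
  c1(0) = i/(2w) (g20 g11 - 2|g11|^2 - |g02|^2/3) + g21/2.\<close>

definition dde_char :: "nat \<Rightarrow> (nat \<Rightarrow> real) \<Rightarrow> (nat \<Rightarrow> real) \<Rightarrow> complex \<Rightarrow> complex" where
  "dde_char n d b l = l - (\<Sum>j<n. of_real (b j) * exp (- l * of_real (d j)))"

definition dde_char_deriv :: "nat \<Rightarrow> (nat \<Rightarrow> real) \<Rightarrow> (nat \<Rightarrow> real) \<Rightarrow> complex \<Rightarrow> complex" where
  "dde_char_deriv n d b l = 1 + (\<Sum>j<n. of_real (b j * d j) * exp (- l * of_real (d j)))"

definition dde_quad :: "nat \<Rightarrow> (nat \<Rightarrow> real) \<Rightarrow> (nat \<Rightarrow> nat \<Rightarrow> real)
    \<Rightarrow> (real \<Rightarrow> complex) \<Rightarrow> (real \<Rightarrow> complex) \<Rightarrow> complex" where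
  "dde_quad n d Q \<phi> \<psi> = (\<Sum>i<n. \<Sum>j<n. of_real (Q i j) * \<phi> (- d i) * \<psi> (- d j))"

definition hopf_first_lyapunov ::
  "nat \<Rightarrow> (nat \<Rightarrow> real) \<Rightarrow> (nat \<Rightarrow> real) \<Rightarrow> (nat \<Rightarrow> nat \<Rightarrow> real) \<Rightarrow> real \<Rightarrow> complex" where
  "hopf_first_lyapunov n d b Q \<omega> =
    (let w = complex_of_real \<omega>;
         q = (\<lambda>\<theta>::real. exp (\<i> * w * of_real \<theta>));
         qb = (\<lambda>\<theta>::real. cnj (q \<theta>));
         B = dde_quad n d Q;
         Db = 1 / dde_char_deriv n d b (\<i> * w);
         F20 = 2 * B q q;
         F11 = B q qb + B qb q;
         F02 = 2 * B qb qb;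
         g20 = Db * F20;
         g11 = Db * F11;
         g02 = Db * F02;
         E1 = F20 / dde_char n d b (2 * \<i> * w);
         E2 = F11 / dde_char n d b 0;
         W20 = (\<lambda>\<theta>. \<i> * g20 / w * q \<theta> + \<i> * cnj g02 / (3 * w) * qb \<theta>
                    + E1 * exp (2 * \<i> * w * of_real \<theta>));
         W11 = (\<lambda>\<theta>. - \<i> * g11 / w * q \<theta> + \<i> * cnj g11 / w * qb \<theta> + E2);
         g21 = Db * (2 * (B W11 q + B q W11) + (B W20 qb + B qb W20))
     in \<i> / (2 * w) * (g20 * g11 - 2 * (of_real (cmod g11))\<^sup>2 - (of_real (cmod g02))\<^sup>2 / 3)
        + g21 / 2)"

text \<open>Right-hand side of  R'(t) = kappa * 2 a R(t) / (gamma C (tau1+tau2)) * (gamma C - y(t)),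
  y(t) = R(t - tau1) + R(t - tau2).\<close>
definition rcp_rhs :: "real \<Rightarrow> real \<Rightarrow> real \<Rightarrow> real \<Rightarrow> real \<Rightarrow> real \<Rightarrow> real \<Rightarrow> real \<Rightarrow> real \<Rightarrow> real" where
  "rcp_rhs \<kappa> a C \<gamma> \<tau>1 \<tau>2 R R1 R2 =
     \<kappa> * (2 * a * R) / (\<gamma> * C * (\<tau>1 + \<tau>2)) * (\<gamma> * C - (R1 + R2))"

definition rcp_equilibrium :: "real \<Rightarrow> real \<Rightarrow> real" where
  "rcp_equilibrium C \<gamma> = \<gamma> * C / 2"

definition rcp_delays :: "real \<Rightarrow> real \<Rightarrow> nat \<Rightarrow> real" where
  "rcp_delays \<tau>1 \<tau>2 j = (if j = 1 then \<tau>1 else if j = 2 then \<tau>2 else 0)"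

definition rcp_lin :: "real \<Rightarrow> real \<Rightarrow> real \<Rightarrow> real \<Rightarrow> nat \<Rightarrow> real" where
  "rcp_lin \<kappa> a \<tau>1 \<tau>2 j = (if j = 1 \<or> j = 2 then - \<kappa> * a / (\<tau>1 + \<tau>2) else 0)"

definition rcp_quadcoeff :: "real \<Rightarrow> real \<Rightarrow> real \<Rightarrow> real \<Rightarrow> real \<Rightarrow> real \<Rightarrow> nat \<Rightarrow> nat \<Rightarrow> real" where
  "rcp_quadcoeff \<kappa> a C \<gamma> \<tau>1 \<tau>2 i j =
     (if i = 0 \<and> (j = 1 \<or> j = 2) then - 2 * \<kappa> * a / (\<gamma> * C * (\<tau>1 + \<tau>2)) else 0)"

text \<open>Sanity fact: the perturbation form above is exactly the RCP model around R* = gamma C / 2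
  (the nonlinearity is purely quadratic).\<close>
lemma rcp_perturbation_form:
  assumes "\<gamma> * C \<noteq> 0" "\<tau>1 + \<tau>2 \<noteq> 0"
  shows "rcp_rhs \<kappa> a C \<gamma> \<tau>1 \<tau>2 (rcp_equilibrium C \<gamma> + u 0)
            (rcp_equilibrium C \<gamma> + u 1) (rcp_equilibrium C \<gamma> + u 2)
       = (\<Sum>j<3. rcp_lin \<kappa> a \<tau>1 \<tau>2 j * u j)
         + (\<Sum>i<3. \<Sum>j<3. rcp_quadcoeff \<kappa> a C \<gamma> \<tau>1 \<tau>2 i j * u i * u j)"
proof -
  have s: "{..<3::nat} = {0,1,2}" by auto
  show ?thesis using assms
    by (simp add: s rcp_rhs_def rcp_equilibrium_def rcp_lin_def rcp_quadcoeff_def)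
       (simp add: divide_simps, algebra)
qed

definition rcp_char :: "real \<Rightarrow> real \<Rightarrow> real \<Rightarrow> real \<Rightarrow> complex \<Rightarrow> complex" where
  "rcp_char a \<tau>1 \<tau>2 \<kappa> l =
     l + of_real (\<kappa> * a / (\<tau>1 + \<tau>2)) * (exp (- l * of_real \<tau>1) + exp (- l * of_real \<tau>2))"

definition rcp_omega0 :: "real \<Rightarrow> real \<Rightarrow> real" where
  "rcp_omega0 \<tau>1 \<tau>2 = pi / (\<tau>1 + \<tau>2)"

definition rcp_kappa_c :: "real \<Rightarrow> real \<Rightarrow> real \<Rightarrow> real" where
  "rcp_kappa_c a \<tau>1 \<tau>2 = pi / (2 * a * cos (pi * (\<tau>1 - \<tau>2) / (2 * (\<tau>1 + \<tau>2))))"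

definition rcp_c1 :: "real \<Rightarrow> real \<Rightarrow> real \<Rightarrow> real \<Rightarrow> real \<Rightarrow> complex" where
  "rcp_c1 a C \<gamma> \<tau>1 \<tau>2 =
     hopf_first_lyapunov 3 (rcp_delays \<tau>1 \<tau>2) (rcp_lin (rcp_kappa_c a \<tau>1 \<tau>2) a \<tau>1 \<tau>2)
       (rcp_quadcoeff (rcp_kappa_c a \<tau>1 \<tau>2) a C \<gamma> \<tau>1 \<tau>2) (rcp_omega0 \<tau>1 \<tau>2)"

definition f_tilde :: "real \<Rightarrow> real" where
  "f_tilde \<theta> = - 2 * pi * sin \<theta> ^ 4 - pi * sin \<theta> ^ 2 * cos (2 * \<theta>) ^ 2
      - 2 * cos (2 * \<theta>) * sin \<theta> ^ 3
      - cos (2 * \<theta>) * sin \<theta> ^ 2 * cos \<theta> * (pi - 2 * \<theta>)"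

end

theory Submission
  imports Defs
begin

text \<open>The quadratic part of the RCP model is q0 * phi(0) * (psi(-\<tau>1) + psi(-\<tau>2)), and at the
  Hopf frequency the delayed sums of q and conj q are opposite (-/+ 2 i sin \<theta>, because
  \<omega>0 \<tau>1 = \<theta> and \<omega>0 \<tau>2 = pi - \<theta>). Hence the mixed coefficient g11 and W11 vanish, and of the HKW
  formula only Re g21 / 2 survives, which evaluates to a positive multiple of f_tilde \<theta>.
  Writing f_tilde \<theta> = - (sin \<theta>)^2 * G \<theta>, the factor G is a sum of nonnegative terms when
  cos 2\<theta> >= 0 and is bounded below by a positive polynomial in |cos \<theta>| otherwise.
  Transversality Re \<lambda>'(\<kappa>c) > 0 follows by implicit differentiation of the characteristic equation.\<close>

lemma quartic_lower_bound_pos: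
  fixes y p :: real
  assumes "0 \<le> y" "y\<^sup>2 < 1/2" "p > 3"
  shows "p * (2 - 2*y\<^sup>2 + (2*y\<^sup>2 - 1)\<^sup>2) + (2*y\<^sup>2 - 1) * (2 + p*y) > 0"
proof -
  have "y \<le> 1"
  proof (rule ccontr)
    assume "\<not> y \<le> 1"
    then have "1 < y\<^sup>2" by (simp add: one_less_power)
    then show False using assms by simp
  qed
  then have "(1 - 2*y\<^sup>2) * (2 + p*y) \<le> (1 - 2*y\<^sup>2) * (2*p)"
    using assms by (intro mult_left_mono) (auto intro: order_trans[of _ "2 + p"] simp: mult_le_cancel_left1)
  also have "\<dots> < p * (2 - 2*y\<^sup>2 + (2*y\<^sup>2 - 1)\<^sup>2)"
  proof -
    have "(2 - 2*y\<^sup>2 + (2*y\<^sup>2 - 1)\<^sup>2) - (2 - 4*y\<^sup>2) = (2*y\<^sup>2 - 1/2)\<^sup>2 + 3/4"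
      by (simp add: power2_eq_square algebra_simps)
    then have "2 - 4*y\<^sup>2 < 2 - 2*y\<^sup>2 + (2*y\<^sup>2 - 1)\<^sup>2"
      using zero_le_power2[of "2*y\<^sup>2 - 1/2"] by linarith
    then have "p * (2 - 4*y\<^sup>2) < p * (2 - 2*y\<^sup>2 + (2*y\<^sup>2 - 1)\<^sup>2)"
      using assms by (intro mult_strict_left_mono) auto
    then show ?thesis by (simp add: algebra_simps)
  qed
  finally show ?thesis by (simp add: algebra_simps)
qed

lemma cos_mult_pi_minus_double_nonneg:
  assumes "0 \<le> t" "t \<le> pi"
  shows "0 \<le> cos t * (pi - 2 * t)"
proof (cases "t \<le> pi / 2")
  case True
  then show ?thesis using assms by (simp add: cos_ge_zero)
next
  case False
  have "0 \<le> cos (pi - t)" using False assms by (intro cos_ge_zero) auto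
  then show ?thesis using False by (simp add: mult_nonpos_nonpos)
qed

lemma f_tilde_neg:
  assumes "0 < t" "t < pi"
  shows "f_tilde t < 0"
proof -
  define s where "s = sin t"
  define c where "c = cos t"
  define C2 where "C2 = cos (2 * t)"
  define G where "G = 2 * pi * s\<^sup>2 + pi * C2\<^sup>2 + 2 * C2 * s + C2 * (c * (pi - 2 * t))"
  have s: "0 < s" "s \<le> 1" using assms by (simp_all add: s_def sin_gt_zero)
  have C2: "C2 = 2 * c\<^sup>2 - 1" by (simp add: C2_def c_def cos_double_cos)
  have c_pi: "0 \<le> c * (pi - 2 * t)"
    using cos_mult_pi_minus_double_nonneg assms by (simp add: c_def)
  have "f_tilde t = - s\<^sup>2 * G"
    by (simp add: f_tilde_def G_def s_def c_def C2_def power2_eq_square power4_eq_xxxx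
        power3_eq_cube algebra_simps)
  moreover have "G > 0"
  proof (cases "C2 \<ge> 0")
    case True
    then show ?thesis using s c_pi unfolding G_def by (simp add: add_pos_nonneg)
  next
    case False
    define y where "y = \<bar>c\<bar>"
    have y: "c\<^sup>2 = y\<^sup>2" "s\<^sup>2 = 1 - y\<^sup>2" "C2 = 2 * y\<^sup>2 - 1"
      using C2 by (simp_all add: y_def s_def c_def sin_squared_eq)
    have "c * (pi - 2 * t) \<le> y * pi"
    proof -
      have "c * (pi - 2 * t) \<le> \<bar>c\<bar> * \<bar>pi - 2 * t\<bar>" by (metis abs_ge_self abs_mult)
      also have "\<dots> \<le> y * pi" using assms unfolding y_def by (intro mult_left_mono) auto
      finally show ?thesis .
    qed
    then have "C2 * (c * (pi - 2 * t)) \<ge> C2 * (y * pi)" "2 * C2 * s \<ge> 2 * C2"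
      using False s by (auto intro: mult_left_mono_neg simp: mult_le_cancel_left1)
    then have "G \<ge> pi * (2 - 2*y\<^sup>2 + (2*y\<^sup>2 - 1)\<^sup>2) + (2*y\<^sup>2 - 1) * (2 + pi*y)"
      unfolding G_def y(2,3) by (simp add: algebra_simps)
    moreover have "y\<^sup>2 < 1/2" using False y(3) by simp
    then have "pi * (2 - 2*y\<^sup>2 + (2*y\<^sup>2 - 1)\<^sup>2) + (2*y\<^sup>2 - 1) * (2 + pi*y) > 0"
      using quartic_lower_bound_pos[of y pi] pi_gt3 by (simp add: y_def)
    ultimately show ?thesis by linarith
  qed
  ultimately show ?thesis using s by simp
qed

lemma Re_hopf_first_lyapunov_no_mixed_term:
  fixes n d b Q \<omega>
  defines "w \<equiv> complex_of_real \<omega>"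
  defines "q \<equiv> \<lambda>\<theta>::real. exp (\<i> * w * of_real \<theta>)"
  defines "qb \<equiv> \<lambda>\<theta>::real. cnj (q \<theta>)"
    and "B \<equiv> dde_quad n d Q"
    and "Db \<equiv> 1 / dde_char_deriv n d b (\<i> * w)"
  defines "W20 \<equiv> \<lambda>\<theta>. \<i> * (Db * (2 * B q q)) / w * q \<theta>
        + \<i> * cnj (Db * (2 * B qb qb)) / (3 * w) * qb \<theta>
        + 2 * B q q / dde_char n d b (2 * \<i> * w) * exp (2 * \<i> * w * of_real \<theta>)"
  assumes "B q qb + B qb q = 0"
  shows "Re (hopf_first_lyapunov n d b Q \<omega>) = Re (Db * (B W20 qb + B qb W20)) / 2"
proof -
  define F20 where "F20 = 2 * B q q"
  define F02 where "F02 = 2 * B qb qb"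
  define F11 where "F11 = B q qb + B qb q"
  define g11 where "g11 = Db * F11"
  define W11 where "W11 = (\<lambda>\<theta>. - \<i> * g11 / w * q \<theta> + \<i> * cnj g11 / w * qb \<theta>
                                + F11 / dde_char n d b 0)"
  have c1: "hopf_first_lyapunov n d b Q \<omega> =
      \<i> / (2 * w) * (Db * F20 * g11 - 2 * (of_real (cmod g11))\<^sup>2 - (of_real (cmod (Db * F02)))\<^sup>2 / 3)
      + Db * (2 * (B W11 q + B q W11) + (B W20 qb + B qb W20)) / 2"
    unfolding hopf_first_lyapunov_def Let_def assms(1-6) F20_def F02_def F11_def g11_def W11_def
    by (rule refl)
  have "F11 = 0" using assms(7) by (simp add: F11_def)
  then have "g11 = 0" "W11 = (\<lambda>_. 0)" by (simp_all add: g11_def W11_def)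
  moreover have "B (\<lambda>_. 0) \<psi> = 0" "B \<psi> (\<lambda>_. 0) = 0" for \<psi>
    by (simp_all add: B_def dde_quad_def)
  ultimately show ?thesis
    unfolding c1 by (simp add: w_def)
qed

lemma has_vector_derivative_eventually_zero:
  fixes f :: "real \<Rightarrow> 'a::real_normed_vector"
  assumes "(f has_vector_derivative d) (at x)" and "\<forall>\<^sub>F y in nhds x. f y = 0"
  shows "d = 0"
proof -
  obtain S where "open S" "x \<in> S" "\<forall>y\<in>S. f y = 0"
    using assms(2) by (auto simp: eventually_nhds)
  then have "(f has_vector_derivative 0) (at x)"
    using has_vector_derivative_transform_within_open[of "\<lambda>_. 0" 0 x S f] by simp
  with assms(1) show ?thesis by (rule vector_derivative_unique_at)
qed

definition rcp_theta :: "real \<Rightarrow> real \<Rightarrow> real" where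
  "rcp_theta \<tau>1 \<tau>2 = pi * \<tau>1 / (\<tau>1 + \<tau>2)"

lemma rcp_theta_bounds:
  assumes "\<tau>1 > 0" "\<tau>2 > 0"
  shows "0 < rcp_theta \<tau>1 \<tau>2" "rcp_theta \<tau>1 \<tau>2 < pi"
  using assms by (auto simp: rcp_theta_def field_simps)

lemma rcp_omega0_mult_delays:
  assumes "\<tau>1 + \<tau>2 \<noteq> 0"
  shows "rcp_omega0 \<tau>1 \<tau>2 * \<tau>1 = rcp_theta \<tau>1 \<tau>2"
    "rcp_omega0 \<tau>1 \<tau>2 * \<tau>2 = pi - rcp_theta \<tau>1 \<tau>2"
  using assms by (simp_all add: rcp_omega0_def rcp_theta_def field_simps)

lemma rcp_kappa_c_gain:
  assumes "a > 0" "\<tau>1 > 0" "\<tau>2 > 0"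
  shows "rcp_kappa_c a \<tau>1 \<tau>2 * a / (\<tau>1 + \<tau>2) = rcp_omega0 \<tau>1 \<tau>2 / (2 * sin (rcp_theta \<tau>1 \<tau>2))"
proof -
  have "pi * (\<tau>1 - \<tau>2) / (2 * (\<tau>1 + \<tau>2)) = rcp_theta \<tau>1 \<tau>2 - pi / 2"
    using assms by (simp add: rcp_theta_def field_simps)
  then have "cos (pi * (\<tau>1 - \<tau>2) / (2 * (\<tau>1 + \<tau>2))) = sin (rcp_theta \<tau>1 \<tau>2)"
    by (simp add: cos_diff)
  moreover have "sin (rcp_theta \<tau>1 \<tau>2) > 0"
    using rcp_theta_bounds[OF assms(2,3)] by (simp add: sin_gt_zero)
  ultimately show ?thesis
    using assms by (simp add: rcp_kappa_c_def rcp_omega0_def field_simps)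
qed

lemma rcp_exp_delays_omega0:
  assumes "\<tau>1 + \<tau>2 \<noteq> 0"
  defines "w \<equiv> complex_of_real (rcp_omega0 \<tau>1 \<tau>2)" and "\<theta> \<equiv> rcp_theta \<tau>1 \<tau>2"
  shows "exp (\<i> * w * of_real (- \<tau>1)) = Complex (cos \<theta>) (- sin \<theta>)"
    and "exp (\<i> * w * of_real (- \<tau>2)) = Complex (- cos \<theta>) (- sin \<theta>)"
    and "exp (2 * \<i> * w * of_real (- \<tau>1)) = Complex (cos (2 * \<theta>)) (- sin (2 * \<theta>))"
    and "exp (2 * \<i> * w * of_real (- \<tau>2)) = Complex (cos (2 * \<theta>)) (sin (2 * \<theta>))"
proof -
  have "w * of_real \<tau>1 = of_real \<theta>" "w * of_real \<tau>2 = of_real (pi - \<theta>)"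
    using rcp_omega0_mult_delays[OF assms(1)] by (simp_all add: w_def \<theta>_def flip: of_real_mult)
  then have "\<i> * w * of_real (- \<tau>1) = \<i> * of_real (- \<theta>)"
    "\<i> * w * of_real (- \<tau>2) = \<i> * of_real (\<theta> - pi)"
    "2 * \<i> * w * of_real (- \<tau>1) = \<i> * of_real (- (2 * \<theta>))"
    "2 * \<i> * w * of_real (- \<tau>2) = \<i> * of_real (2 * \<theta> - 2 * pi)"
    by (simp_all add: mult.assoc) (simp_all add: algebra_simps)
  then show "exp (\<i> * w * of_real (- \<tau>1)) = Complex (cos \<theta>) (- sin \<theta>)"
    "exp (\<i> * w * of_real (- \<tau>2)) = Complex (- cos \<theta>) (- sin \<theta>)"
    "exp (2 * \<i> * w * of_real (- \<tau>1)) = Complex (cos (2 * \<theta>)) (- sin (2 * \<theta>))"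
    "exp (2 * \<i> * w * of_real (- \<tau>2)) = Complex (cos (2 * \<theta>)) (sin (2 * \<theta>))"
    by (simp_all only: cis_conv_exp[symmetric] cis.code) (simp_all add: cos_diff sin_diff)
qed

lemma dde_quad_rcp:
  "dde_quad 3 (rcp_delays \<tau>1 \<tau>2) (rcp_quadcoeff \<kappa> a C \<gamma> \<tau>1 \<tau>2) \<phi> \<psi>
     = of_real (- 2 * \<kappa> * a / (\<gamma> * C * (\<tau>1 + \<tau>2))) * \<phi> 0 * (\<psi> (- \<tau>1) + \<psi> (- \<tau>2))"
  by (simp add: dde_quad_def numeral_3_eq_3 lessThan_Suc rcp_delays_def rcp_quadcoeff_def
      algebra_simps add_divide_distrib)

lemma dde_char_rcp:
  "dde_char 3 (rcp_delays \<tau>1 \<tau>2) (rcp_lin \<kappa> a \<tau>1 \<tau>2) = rcp_char a \<tau>1 \<tau>2 \<kappa>"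
  by (simp add: fun_eq_iff dde_char_def rcp_char_def numeral_3_eq_3 lessThan_Suc rcp_delays_def
      rcp_lin_def algebra_simps)

lemma dde_char_deriv_rcp:
  "dde_char_deriv 3 (rcp_delays \<tau>1 \<tau>2) (rcp_lin \<kappa> a \<tau>1 \<tau>2) l
     = 1 - of_real (\<kappa> * a / (\<tau>1 + \<tau>2))
           * (of_real \<tau>1 * exp (- l * of_real \<tau>1) + of_real \<tau>2 * exp (- l * of_real \<tau>2))"
  by (simp add: dde_char_deriv_def numeral_3_eq_3 lessThan_Suc rcp_delays_def rcp_lin_def
      algebra_simps)

lemma rcp_char_deriv_at_hopf:
  assumes "a > 0" "\<tau>1 > 0" "\<tau>2 > 0"
  defines "\<theta> \<equiv> rcp_theta \<tau>1 \<tau>2" and "w \<equiv> complex_of_real (rcp_omega0 \<tau>1 \<tau>2)"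
  shows "dde_char_deriv 3 (rcp_delays \<tau>1 \<tau>2) (rcp_lin (rcp_kappa_c a \<tau>1 \<tau>2) a \<tau>1 \<tau>2) (\<i> * w)
       = Complex (1 + cos \<theta> * (pi - 2 * \<theta>) / (2 * sin \<theta>)) (pi / 2)"
proof -
  define \<omega> where "\<omega> = rcp_omega0 \<tau>1 \<tau>2"
  have s: "sin \<theta> > 0" using rcp_theta_bounds[OF assms(2,3)] by (simp add: \<theta>_def sin_gt_zero)
  have "exp (- (\<i> * w) * of_real \<tau>1) = Complex (cos \<theta>) (- sin \<theta>)"
    "exp (- (\<i> * w) * of_real \<tau>2) = Complex (- cos \<theta>) (- sin \<theta>)"
    using rcp_exp_delays_omega0(1,2)[of \<tau>1 \<tau>2] assms(2,3) by (simp_all add: \<theta>_def w_def)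
  then have "dde_char_deriv 3 (rcp_delays \<tau>1 \<tau>2) (rcp_lin (rcp_kappa_c a \<tau>1 \<tau>2) a \<tau>1 \<tau>2) (\<i> * w)
      = 1 - of_real (\<omega> / (2 * sin \<theta>))
              * (of_real \<tau>1 * Complex (cos \<theta>) (- sin \<theta>) + of_real \<tau>2 * Complex (- cos \<theta>) (- sin \<theta>))"
    by (simp add: dde_char_deriv_rcp rcp_kappa_c_gain[OF assms(1-3)] \<omega>_def \<theta>_def)
  also have "\<dots> = Complex (1 - (\<omega> * \<tau>1) * cos \<theta> / (2 * sin \<theta>) + (\<omega> * \<tau>2) * cos \<theta> / (2 * sin \<theta>))
                        ((\<omega> * \<tau>1 + \<omega> * \<tau>2) / 2)"
    using s by (simp add: complex_eq_iff field_simps)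
  also have "\<dots> = Complex (1 + cos \<theta> * (pi - 2 * \<theta>) / (2 * sin \<theta>)) (pi / 2)"
    using s rcp_omega0_mult_delays[of \<tau>1 \<tau>2] assms(2,3)
    by (simp only: \<omega>_def \<theta>_def) (simp add: field_simps)
  finally show ?thesis .
qed

lemma rcp_char_at_double_omega0:
  assumes "a > 0" "\<tau>1 > 0" "\<tau>2 > 0"
  defines "\<theta> \<equiv> rcp_theta \<tau>1 \<tau>2" and "\<omega> \<equiv> rcp_omega0 \<tau>1 \<tau>2"
  shows "rcp_char a \<tau>1 \<tau>2 (rcp_kappa_c a \<tau>1 \<tau>2) (2 * \<i> * of_real \<omega>)
       = Complex (\<omega> * cos (2 * \<theta>) / sin \<theta>) (2 * \<omega>)"
proof -
  have "sin \<theta> > 0" using rcp_theta_bounds[OF assms(2,3)] by (simp add: \<theta>_def sin_gt_zero)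
  moreover have "exp (- (2 * \<i> * of_real \<omega>) * of_real \<tau>1) + exp (- (2 * \<i> * of_real \<omega>) * of_real \<tau>2)
      = of_real (2 * cos (2 * \<theta>))"
    using rcp_exp_delays_omega0(3,4)[of \<tau>1 \<tau>2] assms(2,3) by (simp add: \<theta>_def \<omega>_def complex_eq_iff)
  ultimately show ?thesis
    unfolding rcp_char_def rcp_kappa_c_gain[OF assms(1-3)]
    by (simp add: complex_eq_iff \<theta>_def \<omega>_def)
qed

lemma Re_rcp_quotient_f_tilde:
  fixes q0 \<omega> \<theta> :: real
  assumes "sin \<theta> > 0"
  defines "\<sigma> \<equiv> 2 * \<i> * complex_of_real (sin \<theta>)"
    and "Y \<equiv> Complex (1 + cos \<theta> * (pi - 2 * \<theta>) / (2 * sin \<theta>)) (pi / 2)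
            * Complex (\<omega> * cos (2 * \<theta>) / sin \<theta>) (2 * \<omega>)"
  shows "Re (- 2 * of_real q0 ^ 2 * \<sigma> * (\<sigma> + 2 * of_real (cos (2 * \<theta>))) / Y)
       = 4 * q0\<^sup>2 * \<omega> * f_tilde \<theta> / ((sin \<theta>)\<^sup>2 * (cmod Y)\<^sup>2)"
proof -
  define X where "X = - 2 * of_real q0 ^ 2 * \<sigma> * (\<sigma> + 2 * of_real (cos (2 * \<theta>)))"
  have "Re X * Re Y + Im X * Im Y = 4 * q0\<^sup>2 * \<omega> * f_tilde \<theta> / (sin \<theta>)\<^sup>2"
    using assms(1) unfolding X_def \<sigma>_def Y_def f_tilde_def
    by (simp add: field_simps power2_eq_square power4_eq_xxxx power3_eq_cube)
  then show ?thesis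
    unfolding X_def[symmetric] by (simp add: Re_divide cmod_power2)
qed

lemma Re_rcp_c1_eq_quotient:
  fixes a C \<gamma> \<tau>1 \<tau>2 :: real
  assumes "\<tau>1 + \<tau>2 \<noteq> 0"
  defines "\<theta> \<equiv> rcp_theta \<tau>1 \<tau>2" and "w \<equiv> complex_of_real (rcp_omega0 \<tau>1 \<tau>2)"
    and "\<kappa> \<equiv> rcp_kappa_c a \<tau>1 \<tau>2"
  defines "q0 \<equiv> - 2 * \<kappa> * a / (\<gamma> * C * (\<tau>1 + \<tau>2))"
    and "\<sigma> \<equiv> 2 * \<i> * complex_of_real (sin \<theta>)"
    and "D \<equiv> dde_char_deriv 3 (rcp_delays \<tau>1 \<tau>2) (rcp_lin \<kappa> a \<tau>1 \<tau>2) (\<i> * w)"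
    and "K \<equiv> rcp_char a \<tau>1 \<tau>2 \<kappa> (2 * \<i> * w)"
  shows "Re (rcp_c1 a C \<gamma> \<tau>1 \<tau>2) = Re (- 2 * of_real q0 ^ 2 * \<sigma> * (\<sigma> + 2 * of_real (cos (2 * \<theta>))) / (D * K)) / 2"
proof -
  define q where "q = (\<lambda>x::real. exp (\<i> * w * of_real x))"
  define qb where "qb = (\<lambda>x::real. cnj (q x))"
  define B where "B = dde_quad 3 (rcp_delays \<tau>1 \<tau>2) (rcp_quadcoeff \<kappa> a C \<gamma> \<tau>1 \<tau>2)"
  define Bc where "Bc = \<i> * cnj (1 / D * (2 * B qb qb)) / (3 * w)"
  define E1 where "E1 = 2 * B q q / K"
  define W20 where "W20 = (\<lambda>x. \<i> * (1 / D * (2 * B q q)) / w * q x + Bc * qb x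
                              + E1 * exp (2 * \<i> * w * of_real x))"
  have B_eq: "B \<phi> \<psi> = of_real q0 * \<phi> 0 * (\<psi> (- \<tau>1) + \<psi> (- \<tau>2))" for \<phi> \<psi>
    by (simp add: B_def dde_quad_rcp q0_def)
  have q_0: "q 0 = 1" "qb 0 = 1" by (simp_all add: q_def qb_def)
  have q_sum: "q (- \<tau>1) + q (- \<tau>2) = - \<sigma>" "qb (- \<tau>1) + qb (- \<tau>2) = \<sigma>"
    "exp (2 * \<i> * w * of_real (- \<tau>1)) + exp (2 * \<i> * w * of_real (- \<tau>2)) = 2 * of_real (cos (2 * \<theta>))"
    using rcp_exp_delays_omega0[OF assms(1)]
    by (simp_all add: q_def qb_def w_def \<sigma>_def \<theta>_def complex_eq_iff)
  have "Re (rcp_c1 a C \<gamma> \<tau>1 \<tau>2) = Re (1 / D * (B W20 qb + B qb W20)) / 2"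
  proof -
    have "B q qb + B qb q = 0" by (simp add: B_eq q_0 q_sum)
    then show ?thesis
      unfolding rcp_c1_def W20_def Bc_def E1_def K_def D_def B_def qb_def q_def w_def \<kappa>_def
        dde_char_rcp[symmetric]
      by (rule Re_hopf_first_lyapunov_no_mixed_term)
  qed
  also have "W20 (- \<tau>1) + W20 (- \<tau>2) = \<i> * (1 / D * (2 * B q q)) / w * (q (- \<tau>1) + q (- \<tau>2))
      + Bc * (qb (- \<tau>1) + qb (- \<tau>2))
      + E1 * (exp (2 * \<i> * w * of_real (- \<tau>1)) + exp (2 * \<i> * w * of_real (- \<tau>2)))"
    unfolding W20_def by (simp add: algebra_simps add_divide_distrib)
  then have "1 / D * (B W20 qb + B qb W20)
      = 1 / D * of_real q0 * (2 * Bc * \<sigma>) + 1 / D * of_real q0 * E1 * (\<sigma> + 2 * of_real (cos (2 * \<theta>)))"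
    unfolding q_sum by (simp add: B_eq W20_def q_0 q_sum algebra_simps)
  \<comment> \<open>the q-component of W20 has cancelled; its conj q-component contributes a purely imaginary term\<close>
  moreover have "1 / D * of_real q0 * (2 * Bc * \<sigma>)
      = \<i> * of_real (16 * q0\<^sup>2 * (sin \<theta>)\<^sup>2 / (3 * Re w) / (cmod D)\<^sup>2)"
    by (simp add: Bc_def B_eq q_0 q_sum \<sigma>_def w_def power2_eq_square algebra_simps
        flip: complex_norm_square)
  moreover have "1 / D * of_real q0 * E1 * (\<sigma> + 2 * of_real (cos (2 * \<theta>)))
      = - 2 * of_real q0 ^ 2 * \<sigma> * (\<sigma> + 2 * of_real (cos (2 * \<theta>))) / (D * K)"
    by (simp add: E1_def B_eq q_0 q_sum power2_eq_square)
  ultimately show ?thesis by simp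
qed

lemma Re_rcp_c1:
  fixes a C \<gamma> \<tau>1 \<tau>2 :: real
  assumes "a > 0" "\<tau>1 > 0" "\<tau>2 > 0"
  defines "\<theta> \<equiv> rcp_theta \<tau>1 \<tau>2" and "\<omega> \<equiv> rcp_omega0 \<tau>1 \<tau>2"
    and "q0 \<equiv> - 2 * rcp_kappa_c a \<tau>1 \<tau>2 * a / (\<gamma> * C * (\<tau>1 + \<tau>2))"
  defines "Y \<equiv> Complex (1 + cos \<theta> * (pi - 2 * \<theta>) / (2 * sin \<theta>)) (pi / 2)
            * Complex (\<omega> * cos (2 * \<theta>) / sin \<theta>) (2 * \<omega>)"
  shows "Re (rcp_c1 a C \<gamma> \<tau>1 \<tau>2) = 2 * q0\<^sup>2 * \<omega> * f_tilde \<theta> / ((sin \<theta>)\<^sup>2 * (cmod Y)\<^sup>2)"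
proof -
  have "sin \<theta> > 0" using rcp_theta_bounds[OF assms(2,3)] by (simp add: \<theta>_def sin_gt_zero)
  have "Y = dde_char_deriv 3 (rcp_delays \<tau>1 \<tau>2) (rcp_lin (rcp_kappa_c a \<tau>1 \<tau>2) a \<tau>1 \<tau>2) (\<i> * of_real \<omega>)
      * rcp_char a \<tau>1 \<tau>2 (rcp_kappa_c a \<tau>1 \<tau>2) (2 * \<i> * of_real \<omega>)"
    unfolding Y_def \<theta>_def \<omega>_def
    by (simp only: rcp_char_deriv_at_hopf[OF assms(1-3)] rcp_char_at_double_omega0[OF assms(1-3)])
  then have "Re (rcp_c1 a C \<gamma> \<tau>1 \<tau>2)
      = Re (- 2 * of_real q0 ^ 2 * (2 * \<i> * of_real (sin \<theta>))
            * (2 * \<i> * of_real (sin \<theta>) + 2 * of_real (cos (2 * \<theta>))) / Y) / 2"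
    using assms(2,3) unfolding \<theta>_def \<omega>_def q0_def by (simp add: Re_rcp_c1_eq_quotient)
  also have "\<dots> = 2 * q0\<^sup>2 * \<omega> * f_tilde \<theta> / ((sin \<theta>)\<^sup>2 * (cmod Y)\<^sup>2)"
    unfolding Y_def Re_rcp_quotient_f_tilde[OF \<open>sin \<theta> > 0\<close>] by (simp add: mult_ac)
  finally show ?thesis .
qed

lemma rcp_char_along_curve_has_derivative:
  fixes lam :: "real \<Rightarrow> complex"
  assumes "(lam has_vector_derivative l) (at \<kappa>)"
  shows "((\<lambda>\<kappa>. rcp_char a \<tau>1 \<tau>2 \<kappa> (lam \<kappa>)) has_vector_derivative
      l * dde_char_deriv 3 (rcp_delays \<tau>1 \<tau>2) (rcp_lin \<kappa> a \<tau>1 \<tau>2) (lam \<kappa>)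
      + of_real (a / (\<tau>1 + \<tau>2)) * (exp (- lam \<kappa> * of_real \<tau>1) + exp (- lam \<kappa> * of_real \<tau>2)))
    (at \<kappa>)"
proof -
  have exp_delay: "((\<lambda>\<kappa>. exp (- lam \<kappa> * of_real t)) has_vector_derivative
      l * (exp (- lam \<kappa> * of_real t) * - of_real t)) (at \<kappa>)" for t
  proof -
    have "((\<lambda>z. exp (- z * of_real t)) has_field_derivative exp (- lam \<kappa> * of_real t) * - of_real t)
        (at (lam \<kappa>))"
      by (auto intro!: derivative_eq_intros)
    from field_vector_diff_chain_at[OF assms this] show ?thesis by (simp add: o_def)
  qed
  have gain: "((\<lambda>\<kappa>. complex_of_real (\<kappa> * a / (\<tau>1 + \<tau>2))) has_vector_derivative of_real (a / (\<tau>1 + \<tau>2)))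
      (at \<kappa>)"
    by (auto intro!: derivative_eq_intros)
  show ?thesis
    using has_vector_derivative_add[OF assms
        has_vector_derivative_mult[OF gain has_vector_derivative_add[OF exp_delay[of \<tau>1] exp_delay[of \<tau>2]]]]
    by (simp add: rcp_char_def dde_char_deriv_rcp algebra_simps add_divide_distrib)
qed

lemma rcp_transversality:
  fixes lam :: "real \<Rightarrow> complex"
  assumes "a > 0" "\<tau>1 > 0" "\<tau>2 > 0"
    and root: "lam (rcp_kappa_c a \<tau>1 \<tau>2) = \<i> * of_real (rcp_omega0 \<tau>1 \<tau>2)"
    and "(lam has_vector_derivative l) (at (rcp_kappa_c a \<tau>1 \<tau>2))"
    and "\<forall>\<^sub>F \<kappa> in nhds (rcp_kappa_c a \<tau>1 \<tau>2). rcp_char a \<tau>1 \<tau>2 \<kappa> (lam \<kappa>) = 0"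
  shows "Re l > 0"
proof -
  define \<theta> where "\<theta> = rcp_theta \<tau>1 \<tau>2"
  define P where "P = 1 + cos \<theta> * (pi - 2 * \<theta>) / (2 * sin \<theta>)"
  define m where "m = a / (\<tau>1 + \<tau>2)"
  have s: "sin \<theta> > 0" using rcp_theta_bounds[OF assms(2,3)] by (simp add: \<theta>_def sin_gt_zero)
  have "exp (- lam (rcp_kappa_c a \<tau>1 \<tau>2) * of_real \<tau>1) + exp (- lam (rcp_kappa_c a \<tau>1 \<tau>2) * of_real \<tau>2)
      = Complex 0 (- 2 * sin \<theta>)"
    using rcp_exp_delays_omega0(1,2)[of \<tau>1 \<tau>2] assms(2,3) by (simp add: root \<theta>_def complex_eq_iff)
  moreover have "dde_char_deriv 3 (rcp_delays \<tau>1 \<tau>2) (rcp_lin (rcp_kappa_c a \<tau>1 \<tau>2) a \<tau>1 \<tau>2)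
      (lam (rcp_kappa_c a \<tau>1 \<tau>2)) = Complex P (pi / 2)"
    unfolding root P_def \<theta>_def by (rule rcp_char_deriv_at_hopf[OF assms(1-3)])
  ultimately have "l * Complex P (pi / 2) + of_real m * Complex 0 (- 2 * sin \<theta>) = 0"
    using has_vector_derivative_eventually_zero[OF rcp_char_along_curve_has_derivative[OF assms(5)] assms(6)]
    by (simp add: m_def)
  then have "P * (Re l * P - Im l * (pi / 2)) + pi / 2 * (Re l * (pi / 2) + Im l * P - 2 * m * sin \<theta>) = 0"
    by (simp add: complex_eq_iff)
  then have "Re l * (P\<^sup>2 + (pi / 2)\<^sup>2) = pi * m * sin \<theta>"
    by (simp add: power2_eq_square algebra_simps)
  moreover have "pi * m * sin \<theta> > 0" using assms(1-3) s by (simp add: m_def)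
  moreover have "P\<^sup>2 + (pi / 2)\<^sup>2 > 0" by (simp add: add_nonneg_pos)
  ultimately show ?thesis by (metis zero_less_mult_pos2)
qed

lemma Re_rcp_c1_neg:
  assumes "a > 0" "C > 0" "\<gamma> > 0" "\<tau>1 > 0" "\<tau>2 > 0"
  shows "Re (rcp_c1 a C \<gamma> \<tau>1 \<tau>2) < 0"
proof -
  define \<theta> where "\<theta> = rcp_theta \<tau>1 \<tau>2"
  define \<omega> where "\<omega> = rcp_omega0 \<tau>1 \<tau>2"
  define q0 where "q0 = - 2 * rcp_kappa_c a \<tau>1 \<tau>2 * a / (\<gamma> * C * (\<tau>1 + \<tau>2))"
  define Y where "Y = Complex (1 + cos \<theta> * (pi - 2 * \<theta>) / (2 * sin \<theta>)) (pi / 2)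
            * Complex (\<omega> * cos (2 * \<theta>) / sin \<theta>) (2 * \<omega>)"
  have \<theta>: "0 < \<theta>" "\<theta> < pi" using rcp_theta_bounds[OF assms(4,5)] by (simp_all add: \<theta>_def)
  then have "sin \<theta> > 0" by (simp add: sin_gt_zero)
  have \<omega>: "\<omega> > 0" using assms(4,5) by (simp add: \<omega>_def rcp_omega0_def)
  have "q0 = - 2 * (rcp_kappa_c a \<tau>1 \<tau>2 * a / (\<tau>1 + \<tau>2)) / (\<gamma> * C)"
    by (simp add: q0_def field_simps)
  then have "q0 \<noteq> 0"
    using assms \<omega> \<open>sin \<theta> > 0\<close> by (simp add: rcp_kappa_c_gain \<theta>_def \<omega>_def)
  moreover have "Y \<noteq> 0" using \<omega> unfolding Y_def mult_eq_0_iff by (simp add: complex_eq_iff)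
  moreover have "f_tilde \<theta> < 0" using f_tilde_neg[OF \<theta>] .
  ultimately have "2 * q0\<^sup>2 * \<omega> * f_tilde \<theta> < 0" "(sin \<theta>)\<^sup>2 * (cmod Y)\<^sup>2 > 0"
    using \<omega> \<open>sin \<theta> > 0\<close> by (simp_all add: mult_pos_neg)
  moreover have "Re (rcp_c1 a C \<gamma> \<tau>1 \<tau>2) = 2 * q0\<^sup>2 * \<omega> * f_tilde \<theta> / ((sin \<theta>)\<^sup>2 * (cmod Y)\<^sup>2)"
    unfolding \<theta>_def \<omega>_def q0_def Y_def by (rule Re_rcp_c1[OF assms(1,4,5)])
  ultimately show ?thesis by (simp add: divide_neg_pos)
qed

theorem mainTheorem7:
  fixes a C \<gamma> \<tau>1 \<tau>2 :: real
  assumes "a > 0" "C > 0" "\<tau>1 > 0" "\<tau>2 > 0" "0 < \<gamma>" "\<gamma> \<le> 1"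
  defines "\<kappa>c \<equiv> rcp_kappa_c a \<tau>1 \<tau>2"
    and "\<omega>0 \<equiv> rcp_omega0 \<tau>1 \<tau>2"
    and "\<theta> \<equiv> pi * \<tau>1 / (\<tau>1 + \<tau>2)"
    and "c1 \<equiv> rcp_c1 a C \<gamma> \<tau>1 \<tau>2"
  shows "sgn (Re c1) = sgn (2 * pi * f_tilde \<theta> / ((\<gamma> * C)\<^sup>2 * (\<tau>1 + \<tau>2)))
       \<and> sgn (2 * pi * f_tilde \<theta> / ((\<gamma> * C)\<^sup>2 * (\<tau>1 + \<tau>2))) = sgn (f_tilde \<theta>)
       \<and> f_tilde \<theta> < 0
       \<and> 2 * Re c1 < 0
       \<and> (\<forall>(lam::real \<Rightarrow> complex) l.
            lam \<kappa>c = \<i> * of_real \<omega>0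
            \<and> (lam has_vector_derivative l) (at \<kappa>c)
            \<and> (\<forall>\<^sub>F \<kappa> in nhds \<kappa>c. rcp_char a \<tau>1 \<tau>2 \<kappa> (lam \<kappa>) = 0)
            \<longrightarrow> Re l > 0 \<and> - Re c1 / Re l > 0)"
proof -
  have c1: "Re c1 < 0" unfolding c1_def using Re_rcp_c1_neg assms(1-5) by blast
  have f: "f_tilde \<theta> < 0"
    unfolding \<theta>_def rcp_theta_def[symmetric] using f_tilde_neg rcp_theta_bounds assms(3,4) by blast
  have "2 * pi * f_tilde \<theta> / ((\<gamma> * C)\<^sup>2 * (\<tau>1 + \<tau>2)) < 0"
    using f assms(2-5) by (simp add: divide_neg_pos mult_pos_neg)
  moreover have "Re l > 0"
    if "lam \<kappa>c = \<i> * of_real \<omega>0" "(lam has_vector_derivative l) (at \<kappa>c)"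
      "\<forall>\<^sub>F \<kappa> in nhds \<kappa>c. rcp_char a \<tau>1 \<tau>2 \<kappa> (lam \<kappa>) = 0" for lam l
    using rcp_transversality[OF assms(1,3,4)] that unfolding \<kappa>c_def \<omega>0_def by blast
  ultimately show ?thesis using c1 f by (auto simp: sgn_if divide_neg_pos)
qed

end
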